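(* Let $n\ge 1$ and let $P'$, $P''$ be two probability distributions on $\mathfrak{S}_n$. For $i<j$ put $p'_{i,j}=\mathbb{P}_{\Sigma\sim P'}\{\Sigma(i)<\Sigma(j)\}$ and $p''_{i,j}=\mathbb{P}_{\Sigma\sim P''}\{\Sigma(i)<\Sigma(j)\}$. (i) Let $\sigma_{P''}$ be any Kemeny median of $P''$. Then $$L^*_{P'}\le L_{P'}(\sigma_{P''})\le L^*_{P'}+2\sum_{i<j}|p'_{i,j}-p''_{i,j}|.$$ (ii) Suppose that $P'\in\mathcal{T}$ and $P''\in\mathcal{T}$, and set $h=\min_{i<j}|p''_{i,j}-1/2|$. Then $$d_\tau(\sigma^*_{P'},\sigma^*_{P''})\le \frac{1}{h}\sum_{i<j}|p'_{i,j}-p''_{i,j}|.$$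
   Context: $\mathfrak{S}_n$ is the set of permutations of $[n]=\{1,\dots,n\}$. A ranking is a permutation $\sigma$, where $\sigma(i)$ is the rank of item $i$. The Kendall $\tau$ distance is $d_\tau(\sigma,\sigma')=\sum_{i<j}\mathbb{I}\{(\sigma(i)-\sigma(j))(\sigma'(i)-\sigma'(j))<0\}$. For a probability distribution $P$ on $\mathfrak{S}_n$ and $\Sigma\sim P$, set $L_P(\sigma)=\mathbb{E}_{\Sigma\sim P}[d_\tau(\Sigma,\sigma)]$ and $L_P^*=\min_{\sigma\in\mathfrak{S}_n}L_P(\sigma)$. A Kemeny median of $P$ is any minimizer of $L_P$. The pairwise probabilities of $P$ are $p_{i,j}=\mathbb{P}\{\Sigma(i)<\Sigma(j)\}$. $P$ is strictly stochastically transitive if (a) for all $i,j,k\in[n]$, $p_{i,j}\ge1/2$ and $p_{j,k}\ge 1/2$ imply $p_{i,k}\ge 1/2$, and (b) $p_{i,j}\ne 1/2$ for all $i<j$. $\mathcal{T}$ denotes the set of strictly stochastically transitive distributions on $\mathfrak{S}_n$. For $P\in\mathcal{T}$ the Kemeny median is unique; it is denoted $\sigma^*_P$ and equals $\sigma^*_P(i)=1+\sum_{k\ne i}\mathbb{I}\{p_{i,k}<1/2\}$. *)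

theory Defs
  imports "HOL-Probability.Probability" "HOL-Combinatorics.Permutations"
begin

definition perms :: "nat \<Rightarrow> (nat \<Rightarrow> nat) set" where
  "perms n = {\<sigma>. \<sigma> permutes {1..n}}"

definition dtau :: "nat \<Rightarrow> (nat \<Rightarrow> nat) \<Rightarrow> (nat \<Rightarrow> nat) \<Rightarrow> nat" where
  "dtau n \<sigma> \<sigma>' = card {(i,j). 1 \<le> i \<and> i < j \<and> j \<le> n \<and>
      (int (\<sigma> i) - int (\<sigma> j)) * (int (\<sigma>' i) - int (\<sigma>' j)) < 0}"

definition is_dist :: "nat \<Rightarrow> (nat \<Rightarrow> nat) pmf \<Rightarrow> bool" where
  "is_dist n P \<longleftrightarrow> set_pmf P \<subseteq> perms n"

definition risk :: "nat \<Rightarrow> (nat \<Rightarrow> nat) pmf \<Rightarrow> (nat \<Rightarrow> nat) \<Rightarrow> real" where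
  "risk n P \<sigma> = measure_pmf.expectation P (\<lambda>\<Sigma>. real (dtau n \<Sigma> \<sigma>))"

definition risk_star :: "nat \<Rightarrow> (nat \<Rightarrow> nat) pmf \<Rightarrow> real" where
  "risk_star n P = Min (risk n P ` perms n)"

definition kemeny_median :: "nat \<Rightarrow> (nat \<Rightarrow> nat) pmf \<Rightarrow> (nat \<Rightarrow> nat) \<Rightarrow> bool" where
  "kemeny_median n P \<sigma> \<longleftrightarrow> \<sigma> \<in> perms n \<and> (\<forall>\<tau>\<in>perms n. risk n P \<sigma> \<le> risk n P \<tau>)"

definition pw :: "(nat \<Rightarrow> nat) pmf \<Rightarrow> nat \<Rightarrow> nat \<Rightarrow> real" where
  "pw P i j = measure_pmf.prob P {\<Sigma>. \<Sigma> i < \<Sigma> j}"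

definition strictly_sst :: "nat \<Rightarrow> (nat \<Rightarrow> nat) pmf \<Rightarrow> bool" where
  "strictly_sst n P \<longleftrightarrow>
     (\<forall>i\<in>{1..n}. \<forall>j\<in>{1..n}. \<forall>k\<in>{1..n}.
        pw P i j \<ge> 1/2 \<and> pw P j k \<ge> 1/2 \<longrightarrow> pw P i k \<ge> 1/2) \<and>
     (\<forall>i\<in>{1..n}. \<forall>j\<in>{1..n}. i < j \<longrightarrow> pw P i j \<noteq> 1/2)"

text \<open>The Kemeny median of an SST distribution, via the explicit formula.\<close>
definition sigma_star :: "nat \<Rightarrow> (nat \<Rightarrow> nat) pmf \<Rightarrow> nat \<Rightarrow> nat" where
  "sigma_star n P i = (if i \<in> {1..n} then 1 + card {k\<in>{1..n}. k \<noteq> i \<and> pw P i k < 1/2} else i)"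

definition pairs :: "nat \<Rightarrow> (nat \<times> nat) set" where
  "pairs n = {(i,j). 1 \<le> i \<and> i < j \<and> j \<le> n}"

end

theory Submission imports Defs begin

(* The risk is linear in the pairwise probabilities:
   L_P(sigma) is the sum over i < j of the probability that Sigma orders i, j against sigma,
   which is p_{j,i} or p_{i,j}. Hence |L_P'(sigma) - L_P''(sigma)| <= sum |p'_{i,j} - p''_{i,j}|
   uniformly in sigma, and a minimiser of L_P'' is optimal for L_P' up to twice that sum.
   Under strict stochastic transitivity sigma*_P ranks i before j exactly when p_{i,j} > 1/2,
   because the items preferred to i are then also preferred to j. So on every pair where
   sigma*_P' and sigma*_P'' disagree, p'_{i,j} and p''_{i,j} lie on opposite sides of 1/2,
   and the pair contributes at least |p''_{i,j} - 1/2| >= h to the sum. *)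

definition discordant :: "(nat \<Rightarrow> nat) \<Rightarrow> (nat \<Rightarrow> nat) \<Rightarrow> nat \<Rightarrow> nat \<Rightarrow> bool" where
  "discordant \<sigma> \<tau> i j \<longleftrightarrow> (int (\<sigma> i) - int (\<sigma> j)) * (int (\<tau> i) - int (\<tau> j)) < 0"

lemma discordant_iff:
  "discordant \<sigma> \<tau> i j \<longleftrightarrow> \<sigma> i < \<sigma> j \<and> \<tau> j < \<tau> i \<or> \<sigma> j < \<sigma> i \<and> \<tau> i < \<tau> j"
  unfolding discordant_def by (auto simp: mult_less_0_iff)

lemma finite_pairs: "finite (pairs n)"
  by (rule finite_subset[of _ "{1..n} \<times> {1..n}"]) (auto simp: pairs_def)

lemma dtau_eq_card: "dtau n \<sigma> \<tau> = card {(i, j) \<in> pairs n. discordant \<sigma> \<tau> i j}"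
  unfolding dtau_def pairs_def discordant_def by (rule arg_cong[where f = card]) auto

lemma dtau_eq_sum: "real (dtau n \<sigma> \<tau>) = (\<Sum>(i, j)\<in>pairs n. of_bool (discordant \<sigma> \<tau> i j))"
proof -
  have "{(i, j) \<in> pairs n. discordant \<sigma> \<tau> i j} = pairs n \<inter> {(i, j). discordant \<sigma> \<tau> i j}"
    by blast
  then show ?thesis
    by (simp add: dtau_eq_card sum_of_bool_eq[OF finite_pairs finite_pairs] case_prod_unfold)
qed

lemma finite_perms: "finite (perms n)"
  unfolding perms_def by (rule finite_permutations) simp

lemma inj_if_in_perms: "\<sigma> \<in> perms n \<Longrightarrow> inj \<sigma>"
  unfolding perms_def by (rule permutes_inj) simp

lemma finite_set_pmf_if_is_dist: "is_dist n P \<Longrightarrow> finite (set_pmf P)"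
  unfolding is_dist_def by (rule finite_subset[OF _ finite_perms])

lemma pw_diag [simp]: "pw P i i = 0"
  by (simp add: pw_def)

lemma pw_swap:
  assumes "\<forall>\<Sigma>\<in>set_pmf P. \<Sigma> i \<noteq> \<Sigma> j"
  shows "pw P j i = 1 - pw P i j"
proof -
  have "pw P j i = measure_pmf.prob P (UNIV - {\<Sigma>. \<Sigma> i < \<Sigma> j})"
    unfolding pw_def
    by (rule measure_pmf.finite_measure_eq_AE) (auto intro!: AE_pmfI dest!: bspec[OF assms])
  then show ?thesis
    using measure_pmf.prob_compl[of "{\<Sigma>. \<Sigma> i < \<Sigma> j}" P] by (simp add: pw_def)
qed

lemma pw_swap_if_is_dist: "is_dist n P \<Longrightarrow> i \<noteq> j \<Longrightarrow> pw P j i = 1 - pw P i j"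
  by (rule pw_swap) (auto simp: is_dist_def dest!: inj_if_in_perms inj_eq)

lemma expectation_of_bool: "measure_pmf.expectation P (\<lambda>x. of_bool (Q x)) = measure_pmf.prob P {x. Q x}"
proof -
  have "(\<lambda>x. of_bool (Q x) :: real) = indicator {x. Q x}"
    by (simp add: fun_eq_iff indicator_def)
  then show ?thesis
    by simp
qed

lemma risk_eq_sum_pw:
  assumes "finite (set_pmf P)" "inj_on \<sigma> {1..n}"
  shows "risk n P \<sigma> = (\<Sum>(i, j)\<in>pairs n. if \<sigma> i < \<sigma> j then pw P j i else pw P i j)"
proof -
  have "risk n P \<sigma> =
      (\<Sum>(i, j)\<in>pairs n. measure_pmf.prob P {\<Sigma>. discordant \<Sigma> \<sigma> i j})"
    unfolding risk_def dtau_eq_sum case_prod_unfold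
    by (simp add: integral_sum integrable_measure_pmf_finite[OF assms(1)] expectation_of_bool)
  also have "\<dots> = (\<Sum>(i, j)\<in>pairs n. if \<sigma> i < \<sigma> j then pw P j i else pw P i j)"
  proof (intro sum.cong refl, clarify)
    fix i j assume "(i, j) \<in> pairs n"
    then have "\<sigma> i \<noteq> \<sigma> j"
      using inj_onD[OF assms(2), of i j] by (auto simp: pairs_def)
    then show "measure_pmf.prob P {\<Sigma>. discordant \<Sigma> \<sigma> i j} =
        (if \<sigma> i < \<sigma> j then pw P j i else pw P i j)"
      by (auto simp: pw_def discordant_iff)
  qed
  finally show ?thesis .
qed

lemma abs_risk_diff_le:
  assumes "is_dist n P1" "is_dist n P2" "\<sigma> \<in> perms n"
  shows "\<bar>risk n P1 \<sigma> - risk n P2 \<sigma>\<bar> \<le> (\<Sum>(i, j)\<in>pairs n. \<bar>pw P1 i j - pw P2 i j\<bar>)"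
proof -
  define r where "r P i j = (if \<sigma> i < \<sigma> j then pw P j i else pw P i j)" for P i j
  have inj: "inj_on \<sigma> {1..n}"
    using inj_if_in_perms[OF assms(3)] by (rule inj_on_subset) simp
  have "risk n P1 \<sigma> - risk n P2 \<sigma> = (\<Sum>(i, j)\<in>pairs n. r P1 i j - r P2 i j)"
    unfolding risk_eq_sum_pw[OF finite_set_pmf_if_is_dist[OF assms(1)] inj]
      risk_eq_sum_pw[OF finite_set_pmf_if_is_dist[OF assms(2)] inj] r_def
    by (simp add: case_prod_unfold sum_subtractf)
  also have "\<bar>\<dots>\<bar> \<le> (\<Sum>(i, j)\<in>pairs n. \<bar>r P1 i j - r P2 i j\<bar>)"
    unfolding case_prod_unfold by (rule sum_abs)
  also have "\<dots> = (\<Sum>(i, j)\<in>pairs n. \<bar>pw P1 i j - pw P2 i j\<bar>)"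
  proof (intro sum.cong refl, clarify)
    fix i j assume "(i, j) \<in> pairs n"
    then have "i \<noteq> j" by (simp add: pairs_def)
    then have "pw P1 j i - pw P2 j i = - (pw P1 i j - pw P2 i j)"
      by (simp add: pw_swap_if_is_dist[OF assms(1) \<open>i \<noteq> j\<close>]
          pw_swap_if_is_dist[OF assms(2) \<open>i \<noteq> j\<close>])
    then show "\<bar>r P1 i j - r P2 i j\<bar> = \<bar>pw P1 i j - pw P2 i j\<bar>"
      by (simp add: r_def abs_minus_commute)
  qed
  finally show ?thesis .
qed

lemma le_Min_image_add_if_minimizer:
  fixes f g :: "'a \<Rightarrow> real"
  assumes "finite S" "x \<in> S" "\<forall>y\<in>S. g x \<le> g y" "\<forall>y\<in>S. \<bar>f y - g y\<bar> \<le> D"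
  shows "f x \<le> Min (f ` S) + 2 * D"
proof -
  obtain y where y: "y \<in> S" "f y = Min (f ` S)"
    using Min_in[of "f ` S"] assms(1,2) by fastforce
  have "f x \<le> g x + D" using assms(2,4) by fastforce
  also have "\<dots> \<le> g y + D" using assms(3) y(1) by simp
  also have "\<dots> \<le> f y + 2 * D" using assms(4) y(1) by fastforce
  finally show ?thesis using y(2) by simp
qed

lemma risk_star_le_risk: "\<sigma> \<in> perms n \<Longrightarrow> risk_star n P \<le> risk n P \<sigma>"
  unfolding risk_star_def by (simp add: finite_perms)

lemma risk_kemeny_median_le:
  assumes "is_dist n P1" "is_dist n P2" "kemeny_median n P2 \<sigma>"
  shows "risk n P1 \<sigma> \<le> risk_star n P1 + 2 * (\<Sum>(i, j)\<in>pairs n. \<bar>pw P1 i j - pw P2 i j\<bar>)"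
  unfolding risk_star_def
proof (rule le_Min_image_add_if_minimizer[OF finite_perms])
  show "\<sigma> \<in> perms n" "\<forall>\<tau>\<in>perms n. risk n P2 \<sigma> \<le> risk n P2 \<tau>"
    using assms(3) by (auto simp: kemeny_median_def)
  show "\<forall>\<tau>\<in>perms n. \<bar>risk n P1 \<tau> - risk n P2 \<tau>\<bar> \<le> (\<Sum>(i, j)\<in>pairs n. \<bar>pw P1 i j - pw P2 i j\<bar>)"
    using abs_risk_diff_le[OF assms(1,2)] by blast
qed

lemma pw_neq_half:
  assumes "is_dist n P" "strictly_sst n P" "i \<in> {1..n}" "j \<in> {1..n}" "i \<noteq> j"
  shows "pw P i j \<noteq> 1/2"
proof (cases "i < j")
  case True
  then show ?thesis using assms(2-4) by (simp add: strictly_sst_def)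
next
  case False
  then have "pw P j i \<noteq> 1/2" using assms(2-5) by (simp add: strictly_sst_def)
  then show ?thesis using pw_swap_if_is_dist[OF assms(1,5)] by simp
qed

lemma sigma_star_less_if_pw_gt_half:
  assumes "is_dist n P" "strictly_sst n P" "i \<in> {1..n}" "j \<in> {1..n}" "1/2 < pw P i j"
  shows "sigma_star n P i < sigma_star n P j"
proof -
  define A where "A x = {k \<in> {1..n}. k \<noteq> x \<and> pw P x k < 1/2}" for x
  have "i \<noteq> j" using assms(5) by auto
  have "A i \<subseteq> A j"
  proof
    fix k assume "k \<in> A i"
    then have k: "k \<in> {1..n}" "i \<noteq> k" "pw P i k < 1/2" by (auto simp: A_def)
    have "k \<noteq> j" using k(3) assms(5) by auto
    have "1/2 \<le> pw P k i"
      using k(3) pw_swap_if_is_dist[OF assms(1) k(2)] by simp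
    moreover have "1/2 \<le> pw P k i \<Longrightarrow> 1/2 \<le> pw P i j \<Longrightarrow> 1/2 \<le> pw P k j"
      using assms(2-4) k(1) unfolding strictly_sst_def by blast
    ultimately have "1/2 \<le> pw P k j" using assms(5) by simp
    then have "pw P j k < 1/2"
      using pw_swap_if_is_dist[OF assms(1), of j k] pw_neq_half[OF assms(1,2,4) k(1)] \<open>k \<noteq> j\<close>
      by fastforce
    then show "k \<in> A j" using k(1) \<open>k \<noteq> j\<close> by (simp add: A_def)
  qed
  moreover have "i \<in> A j" "i \<notin> A i"
    using assms(3,5) \<open>i \<noteq> j\<close> pw_swap_if_is_dist[OF assms(1) \<open>i \<noteq> j\<close>] by (auto simp: A_def)
  ultimately have "card (A i) < card (A j)"
    by (intro psubset_card_mono) (auto simp: A_def)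
  then show ?thesis using assms(3,4) by (simp add: sigma_star_def A_def)
qed

lemma sigma_star_less_iff:
  assumes "is_dist n P" "strictly_sst n P" "i \<in> {1..n}" "j \<in> {1..n}" "i \<noteq> j"
  shows "sigma_star n P i < sigma_star n P j \<longleftrightarrow> 1/2 < pw P i j"
proof
  assume less: "sigma_star n P i < sigma_star n P j"
  show "1/2 < pw P i j"
  proof (rule ccontr)
    assume "\<not> 1/2 < pw P i j"
    then have "1/2 < pw P j i"
      using pw_neq_half[OF assms] pw_swap_if_is_dist[OF assms(1,5)] by simp
    then show False
      using sigma_star_less_if_pw_gt_half[OF assms(1,2,4,3)] less by simp
  qed
qed (rule sigma_star_less_if_pw_gt_half[OF assms(1-4)])

lemma abs_pw_sub_half_le_if_discordant:
  assumes "is_dist n P1" "is_dist n P2" "strictly_sst n P1" "strictly_sst n P2"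
    and "(i, j) \<in> pairs n" "discordant (sigma_star n P1) (sigma_star n P2) i j"
  shows "\<bar>pw P2 i j - 1/2\<bar> \<le> \<bar>pw P1 i j - pw P2 i j\<bar>"
proof -
  from assms(5) have ij: "i \<in> {1..n}" "j \<in> {1..n}" "i \<noteq> j" by (auto simp: pairs_def)
  then have "j \<noteq> i" by simp
  have "1/2 < pw P1 i j \<and> pw P2 i j < 1/2 \<or> pw P1 i j < 1/2 \<and> 1/2 < pw P2 i j"
    using assms(6)
    unfolding discordant_iff sigma_star_less_iff[OF assms(1,3) ij] sigma_star_less_iff[OF assms(2,4) ij]
      sigma_star_less_iff[OF assms(1,3) ij(2,1) \<open>j \<noteq> i\<close>] sigma_star_less_iff[OF assms(2,4) ij(2,1) \<open>j \<noteq> i\<close>]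
      pw_swap_if_is_dist[OF assms(1) ij(3)] pw_swap_if_is_dist[OF assms(2) ij(3)]
    by linarith
  then show ?thesis by linarith
qed

lemma card_mult_le_sum:
  fixes f :: "'a \<Rightarrow> real"
  assumes "finite A" "B \<subseteq> A" "\<forall>x\<in>A. 0 \<le> f x" "\<forall>x\<in>B. h \<le> f x"
  shows "real (card B) * h \<le> sum f A"
proof -
  have "real (card B) * h = (\<Sum>x\<in>B. h)" by simp
  also have "\<dots> \<le> sum f B" using assms(4) by (intro sum_mono) simp
  also have "\<dots> \<le> sum f A" using assms(1-3) by (intro sum_mono2) auto
  finally show ?thesis .
qed

lemma dtau_sigma_star_le:
  assumes "is_dist n P1" "is_dist n P2" "strictly_sst n P1" "strictly_sst n P2"
  shows "real (dtau n (sigma_star n P1) (sigma_star n P2))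
    \<le> (\<Sum>(i, j)\<in>pairs n. \<bar>pw P1 i j - pw P2 i j\<bar>) / Min ((\<lambda>(i, j). \<bar>pw P2 i j - 1/2\<bar>) ` pairs n)"
proof (cases "pairs n = {}")
  case True
  then show ?thesis by (simp add: dtau_eq_card)
next
  case False
  let ?h = "Min ((\<lambda>(i, j). \<bar>pw P2 i j - 1/2\<bar>) ` pairs n)"
  have h_pos: "0 < ?h"
  proof -
    obtain i j where "(i, j) \<in> pairs n" "?h = \<bar>pw P2 i j - 1/2\<bar>"
      using Min_in[of "(\<lambda>(i, j). \<bar>pw P2 i j - 1/2\<bar>) ` pairs n"] finite_pairs False by fastforce
    then show ?thesis using pw_neq_half[OF assms(2,4)] by (auto simp: pairs_def)
  qed
  have "real (dtau n (sigma_star n P1) (sigma_star n P2)) * ?h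
      \<le> (\<Sum>(i, j)\<in>pairs n. \<bar>pw P1 i j - pw P2 i j\<bar>)"
    unfolding dtau_eq_card
  proof (rule card_mult_le_sum[OF finite_pairs], safe)
    fix i j assume "(i, j) \<in> pairs n" "discordant (sigma_star n P1) (sigma_star n P2) i j"
    moreover have "?h \<le> \<bar>pw P2 i j - 1/2\<bar>"
      using \<open>(i, j) \<in> pairs n\<close> by (intro Min_le) (force simp: finite_pairs)+
    ultimately show "?h \<le> \<bar>pw P1 i j - pw P2 i j\<bar>"
      using abs_pw_sub_half_le_if_discordant[OF assms] by fastforce
  qed auto
  then show ?thesis using h_pos by (simp add: pos_le_divide_eq)
qed

theorem lemma4:
  fixes n :: nat and P1 P2 :: "(nat \<Rightarrow> nat) pmf"
  assumes "n \<ge> 1" and "is_dist n P1" and "is_dist n P2"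
  shows "(\<forall>\<sigma>. kemeny_median n P2 \<sigma> \<longrightarrow>
            risk_star n P1 \<le> risk n P1 \<sigma> \<and>
            risk n P1 \<sigma> \<le> risk_star n P1 + 2 * (\<Sum>(i,j)\<in>pairs n. \<bar>pw P1 i j - pw P2 i j\<bar>))
       \<and> (strictly_sst n P1 \<and> strictly_sst n P2 \<longrightarrow>
            real (dtau n (sigma_star n P1) (sigma_star n P2))
              \<le> (\<Sum>(i,j)\<in>pairs n. \<bar>pw P1 i j - pw P2 i j\<bar>)
                 / Min ((\<lambda>(i,j). \<bar>pw P2 i j - 1/2\<bar>) ` pairs n))"
proof (intro conjI allI impI)
  fix \<sigma> assume median: "kemeny_median n P2 \<sigma>"
  then show "risk_star n P1 \<le> risk n P1 \<sigma>"
    by (simp add: kemeny_median_def risk_star_le_risk)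
  show "risk n P1 \<sigma> \<le> risk_star n P1 + 2 * (\<Sum>(i,j)\<in>pairs n. \<bar>pw P1 i j - pw P2 i j\<bar>)"
    using risk_kemeny_median_le[OF assms(2,3) median] .
next
  assume "strictly_sst n P1 \<and> strictly_sst n P2"
  then show "real (dtau n (sigma_star n P1) (sigma_star n P2))
      \<le> (\<Sum>(i,j)\<in>pairs n. \<bar>pw P1 i j - pw P2 i j\<bar>) / Min ((\<lambda>(i,j). \<bar>pw P2 i j - 1/2\<bar>) ` pairs n)"
    using dtau_sigma_star_le[OF assms(2,3)] by blast
qed

end
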